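(* Let $\mathbb F$ be a field, $q\in\mathbb F$, $f,g\in\mathbb F[h]$. The associated graded algebra $\mathrm{Gr}(\mathcal H_q(f,g))=\bigoplus_{\alpha,\beta\ge 0}\mathcal F_{(\alpha,\beta)}/\mathcal F^-_{(\alpha,\beta)}$ is generated by the images $\bar x,\bar y,\bar h$ of $x,y,h$ subject to the relations $\bar h\bar x=\bar x f(\bar h)$, $\bar y\bar h=f(\bar h)\bar y$, $\bar y\bar x=q\bar x\bar y$; that is, $\mathrm{Gr}(\mathcal H_q(f,g))\cong\mathcal H_q(f,0)$.
   Context: For a field $\mathbb F$, $q\in\mathbb F$ and $f,g\in\mathbb F[h]$, $\mathcal H_q(f,g)$ is the unital associative $\mathbb F$-algebra generated by $x,y,h$ with relations $hx=xf(h)$, $yh=f(h)y$, $yx-qxy=g(h)$. Every element $a$ can be written uniquely as $a=\sum_{i,j\ge 0}x^ip_{ij}(h)y^j$ with $p_{ij}\in\mathbb F[h]$. For $a\ne0$, $\mathrm{Deg}(a)$ is the lexicographic maximum of $\{(i,j):p_{ij}\ne 0\}$, $\mathrm{Deg}(0)=(-\infty,-\infty)$; $\mathcal F_{(\alpha,\beta)}=\{a:\mathrm{Deg}(a)\le(\alpha,\beta)\}$ and $\mathcal F^-_{(\alpha,\beta)}=\{a:\mathrm{Deg}(a)<(\alpha,\beta)\}$ in lexicographic order; these form an increasing $\mathbb Z_{\ge0}^2$-filtration of $\mathcal H_q(f,g)$. *)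

theory Defs
  imports "HOL-Algebra.Ring" "HOL-Computational_Algebra.Polynomial"
    "HOL-Library.Product_Lexorder" "HOL-Library.Option_ord"
begin

definition is_F_algebra :: "('a, 'm) ring_scheme \<Rightarrow> ('k::field \<Rightarrow> 'a) \<Rightarrow> bool" where
  "is_F_algebra R emb \<longleftrightarrow> ring R \<and>
     (\<forall>c. emb c \<in> carrier R) \<and>
     (\<forall>c d. emb (c + d) = emb c \<oplus>\<^bsub>R\<^esub> emb d) \<and>
     (\<forall>c d. emb (c * d) = emb c \<otimes>\<^bsub>R\<^esub> emb d) \<and>
     emb 1 = \<one>\<^bsub>R\<^esub> \<and>
     (\<forall>c. \<forall>a\<in>carrier R. emb c \<otimes>\<^bsub>R\<^esub> a = a \<otimes>\<^bsub>R\<^esub> emb c)"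

definition peval :: "('a, 'm) ring_scheme \<Rightarrow> ('k::field \<Rightarrow> 'a) \<Rightarrow> 'k poly \<Rightarrow> 'a \<Rightarrow> 'a" where
  "peval R emb p a = finsum R (\<lambda>i. emb (coeff p i) \<otimes>\<^bsub>R\<^esub> (a [^]\<^bsub>R\<^esub> (i::nat))) {..degree p}"

definition psupp :: "(nat \<Rightarrow> nat \<Rightarrow> 'k::zero) \<Rightarrow> (nat \<times> nat) set" where
  "psupp P = {(i, j). P i j \<noteq> 0}"

definition nf :: "('a, 'm) ring_scheme \<Rightarrow> ('k::field \<Rightarrow> 'a) \<Rightarrow> 'a \<Rightarrow> 'a \<Rightarrow> 'a
                   \<Rightarrow> (nat \<Rightarrow> nat \<Rightarrow> 'k poly) \<Rightarrow> 'a" where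
  "nf R emb x y h P = finsum R
     (\<lambda>(i, j). (x [^]\<^bsub>R\<^esub> (i::nat)) \<otimes>\<^bsub>R\<^esub> peval R emb (P i j) h \<otimes>\<^bsub>R\<^esub> (y [^]\<^bsub>R\<^esub> (j::nat)))
     (psupp P)"

text \<open>R (with scalars emb and distinguished elements x, y, h) is (a copy of) the algebra
  H_q(f,g): it is an F-algebra, x, y, h satisfy the defining relations
  hx = x f(h), yh = f(h) y, yx - q xy = g(h), and every element has a unique expression
  sum_{i,j} x^i p_ij(h) y^j.  (Such an algebra is canonically isomorphic to the algebra
  presented by these generators and relations.)\<close>
definition is_Hq :: "('a, 'm) ring_scheme \<Rightarrow> ('k::field \<Rightarrow> 'a) \<Rightarrow> 'k \<Rightarrow> 'k poly \<Rightarrow> 'k poly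
                     \<Rightarrow> 'a \<Rightarrow> 'a \<Rightarrow> 'a \<Rightarrow> bool" where
  "is_Hq R emb q f g x y h \<longleftrightarrow>
     is_F_algebra R emb \<and> x \<in> carrier R \<and> y \<in> carrier R \<and> h \<in> carrier R \<and>
     h \<otimes>\<^bsub>R\<^esub> x = x \<otimes>\<^bsub>R\<^esub> peval R emb f h \<and>
     y \<otimes>\<^bsub>R\<^esub> h = peval R emb f h \<otimes>\<^bsub>R\<^esub> y \<and>
     y \<otimes>\<^bsub>R\<^esub> x = (emb q \<otimes>\<^bsub>R\<^esub> x \<otimes>\<^bsub>R\<^esub> y) \<oplus>\<^bsub>R\<^esub> peval R emb g h \<and>
     (\<forall>a\<in>carrier R. \<exists>!P. finite (psupp P) \<and> a = nf R emb x y h P)"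

definition nfcoef :: "('a, 'm) ring_scheme \<Rightarrow> ('k::field \<Rightarrow> 'a) \<Rightarrow> 'a \<Rightarrow> 'a \<Rightarrow> 'a
                       \<Rightarrow> 'a \<Rightarrow> nat \<Rightarrow> nat \<Rightarrow> 'k poly" where
  "nfcoef R emb x y h a = (THE P. finite (psupp P) \<and> a = nf R emb x y h P)"

text \<open>Deg(a) is the lexicographic maximum of the support (pairs are ordered
  lexicographically by Product_Lexorder); None plays the role of (-inf,-inf), and
  None is below every Some d (Option_ord).\<close>
definition Deg :: "('a, 'm) ring_scheme \<Rightarrow> ('k::field \<Rightarrow> 'a) \<Rightarrow> 'a \<Rightarrow> 'a \<Rightarrow> 'a
                    \<Rightarrow> 'a \<Rightarrow> (nat \<times> nat) option" where
  "Deg R emb x y h a =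
     (let S = psupp (nfcoef R emb x y h a) in if S = {} then None else Some (Max S))"

definition Filt :: "('a, 'm) ring_scheme \<Rightarrow> ('k::field \<Rightarrow> 'a) \<Rightarrow> 'a \<Rightarrow> 'a \<Rightarrow> 'a
                     \<Rightarrow> nat \<times> nat \<Rightarrow> 'a set" where
  "Filt R emb x y h d = {a \<in> carrier R. Deg R emb x y h a \<le> Some d}"

definition Filtm :: "('a, 'm) ring_scheme \<Rightarrow> ('k::field \<Rightarrow> 'a) \<Rightarrow> 'a \<Rightarrow> 'a \<Rightarrow> 'a
                      \<Rightarrow> nat \<times> nat \<Rightarrow> 'a set" where
  "Filtm R emb x y h d = {a \<in> carrier R. Deg R emb x y h a < Some d}"

definition grcls :: "('a, 'm) ring_scheme \<Rightarrow> ('k::field \<Rightarrow> 'a) \<Rightarrow> 'a \<Rightarrow> 'a \<Rightarrow> 'a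
                      \<Rightarrow> nat \<times> nat \<Rightarrow> 'a \<Rightarrow> 'a set" where
  "grcls R emb x y h d a = {a \<oplus>\<^bsub>R\<^esub> b | b. b \<in> Filtm R emb x y h d}"

text \<open>Elements of Gr = direct sum of the F_d / F^-_d: finitely supported families of
  classes.\<close>
definition gr_carrier :: "('a, 'm) ring_scheme \<Rightarrow> ('k::field \<Rightarrow> 'a) \<Rightarrow> 'a \<Rightarrow> 'a \<Rightarrow> 'a
                           \<Rightarrow> (nat \<times> nat \<Rightarrow> 'a set) set" where
  "gr_carrier R emb x y h =
     {G. (\<forall>d. G d \<in> grcls R emb x y h d ` Filt R emb x y h d) \<and>
         finite {d. G d \<noteq> Filtm R emb x y h d}}"

definition rep :: "'a set \<Rightarrow> 'a" where
  "rep C = (SOME a. a \<in> C)"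

definition gr_zero :: "('a, 'm) ring_scheme \<Rightarrow> ('k::field \<Rightarrow> 'a) \<Rightarrow> 'a \<Rightarrow> 'a \<Rightarrow> 'a
                        \<Rightarrow> nat \<times> nat \<Rightarrow> 'a set" where
  "gr_zero R emb x y h = (\<lambda>d. Filtm R emb x y h d)"

definition gr_hom :: "('a, 'm) ring_scheme \<Rightarrow> ('k::field \<Rightarrow> 'a) \<Rightarrow> 'a \<Rightarrow> 'a \<Rightarrow> 'a
                       \<Rightarrow> nat \<times> nat \<Rightarrow> 'a \<Rightarrow> nat \<times> nat \<Rightarrow> 'a set" where
  "gr_hom R emb x y h d a =
     (\<lambda>e. if e = d then grcls R emb x y h d a else Filtm R emb x y h e)"

definition gr_add :: "('a, 'm) ring_scheme \<Rightarrow> ('k::field \<Rightarrow> 'a) \<Rightarrow> 'a \<Rightarrow> 'a \<Rightarrow> 'a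
                       \<Rightarrow> (nat \<times> nat \<Rightarrow> 'a set) \<Rightarrow> (nat \<times> nat \<Rightarrow> 'a set) \<Rightarrow> nat \<times> nat \<Rightarrow> 'a set" where
  "gr_add R emb x y h G H =
     (\<lambda>d. grcls R emb x y h d (rep (G d) \<oplus>\<^bsub>R\<^esub> rep (H d)))"

text \<open>Product induced by F_(a,b) F_(c,d) \<subseteq> F_(a+c,b+d):
  (G H)_(a,b) = sum over (a1+a2, b1+b2) = (a,b) of the classes of rep(G_(a1,b1)) rep(H_(a2,b2)).\<close>
definition gr_mul :: "('a, 'm) ring_scheme \<Rightarrow> ('k::field \<Rightarrow> 'a) \<Rightarrow> 'a \<Rightarrow> 'a \<Rightarrow> 'a
                       \<Rightarrow> (nat \<times> nat \<Rightarrow> 'a set) \<Rightarrow> (nat \<times> nat \<Rightarrow> 'a set) \<Rightarrow> nat \<times> nat \<Rightarrow> 'a set" where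
  "gr_mul R emb x y h G H =
     (\<lambda>(a, b). grcls R emb x y h (a, b)
        (finsum R (\<lambda>((a1, b1), (a2, b2)). rep (G (a1, b1)) \<otimes>\<^bsub>R\<^esub> rep (H (a2, b2)))
           {((a1, b1), (a2, b2)). a1 + a2 = a \<and> b1 + b2 = b}))"

definition Gr :: "('a, 'm) ring_scheme \<Rightarrow> ('k::field \<Rightarrow> 'a) \<Rightarrow> 'a \<Rightarrow> 'a \<Rightarrow> 'a
                   \<Rightarrow> (nat \<times> nat \<Rightarrow> 'a set) ring" where
  "Gr R emb x y h =
     \<lparr> carrier = gr_carrier R emb x y h,
       monoid.mult = gr_mul R emb x y h,
       monoid.one = gr_hom R emb x y h (0, 0) \<one>\<^bsub>R\<^esub>,
       ring.zero = gr_zero R emb x y h,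
       ring.add = gr_add R emb x y h \<rparr>"

definition gr_emb :: "('a, 'm) ring_scheme \<Rightarrow> ('k::field \<Rightarrow> 'a) \<Rightarrow> 'a \<Rightarrow> 'a \<Rightarrow> 'a
                       \<Rightarrow> 'k \<Rightarrow> nat \<times> nat \<Rightarrow> 'a set" where
  "gr_emb R emb x y h c = gr_hom R emb x y h (0, 0) (emb c)"

end

theory Submission
  imports Defs "HOL-Library.Product_Plus"
begin

(* The monomials x^i p(h) y^j form a basis of H_q(f,g), and F_(i,j) is spanned by those whose
   bidegree is lexicographically at most (i,j). Polynomials in h move past x and y at the price of
   substituting f, while y^j x^k = x^k c(h) y^j + (terms of x-degree < k), because the correction
   g(h) in y x = q x y + g(h) has bidegree (0,0). Hence F_d F_e <= F_(d+e) and
   F^-_d F_e + F_d F^-_e <= F^-_(d+e), so Gr is a graded ring in which homogeneous classes are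
   multiplied in R. In bidegree (1,1) the class of g(h) vanishes, which turns the relations of
   H_q(f,g) into those of H_q(f,0); and since an element of F_(i,j) is congruent modulo F^-_(i,j)
   to its leading monomial x^i p_ij(h) y^j, every element of Gr has a unique normal form. *)

lemma add_mono_lex:
  fixes d1 d2 e1 e2 :: "nat \<times> nat"
  shows "d1 \<le> e1 \<Longrightarrow> d2 \<le> e2 \<Longrightarrow> d1 + d2 \<le> e1 + e2"
  by (cases d1; cases d2; cases e1; cases e2) auto

lemma add_strict_left_mono_lex:
  fixes d1 d2 e1 e2 :: "nat \<times> nat"
  shows "d1 < e1 \<Longrightarrow> d2 \<le> e2 \<Longrightarrow> d1 + d2 < e1 + e2"
  by (cases d1; cases d2; cases e1; cases e2) auto

lemma add_strict_right_mono_lex: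
  fixes d1 d2 e1 e2 :: "nat \<times> nat"
  shows "d1 \<le> e1 \<Longrightarrow> d2 < e2 \<Longrightarrow> d1 + d2 < e1 + e2"
  by (cases d1; cases d2; cases e1; cases e2) auto

lemma zero_pair_add [simp]:
  fixes d :: "nat \<times> nat"
  shows "(0, 0) + d = d" "d + (0, 0) = d"
  by (cases d; simp)+

section \<open>Polynomial evaluation\<close>

locale F_algebra =
  fixes R :: "('a, 'm) ring_scheme" (structure) and emb :: "'k::field \<Rightarrow> 'a"
  assumes F_algebra: "is_F_algebra R emb"

sublocale F_algebra \<subseteq> ring R
  using F_algebra unfolding is_F_algebra_def by blast

context F_algebra
begin

lemma emb_closed [simp]: "emb c \<in> carrier R"
  and emb_add: "emb (c + d) = emb c \<oplus> emb d"
  and emb_mult: "emb (c * d) = emb c \<otimes> emb d"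
  and emb_one [simp]: "emb 1 = \<one>"
  and emb_comm: "a \<in> carrier R \<Longrightarrow> emb c \<otimes> a = a \<otimes> emb c"
  using F_algebra unfolding is_F_algebra_def by blast+

lemma emb_zero [simp]: "emb 0 = \<zero>"
  using emb_add[of 0 0] add.l_cancel_one'[of "emb 0" "emb 0"] by simp

lemma peval_closed [simp]: "a \<in> carrier R \<Longrightarrow> peval R emb p a \<in> carrier R"
  unfolding peval_def by (rule finsum_closed) auto

lemma peval_upto:
  assumes "degree p \<le> n" "a \<in> carrier R"
  shows "peval R emb p a = (\<Oplus>i\<in>{..n}. emb (coeff p i) \<otimes> a [^] i)"
  using assms(1)
proof (induction n)
  case 0
  then show ?case by (simp add: peval_def)
next
  case (Suc n)
  show ?case
  proof (cases "degree p \<le> n")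
    case True
    then have "coeff p (Suc n) = 0" by (simp add: coeff_eq_0)
    then show ?thesis using Suc True assms(2) by (simp add: finsum_Suc)
  next
    case False
    then show ?thesis using Suc by (simp add: peval_def le_Suc_eq)
  qed
qed

lemma peval_pCons:
  assumes a: "a \<in> carrier R"
  shows "peval R emb (pCons c p) a = emb c \<oplus> a \<otimes> peval R emb p a"
proof -
  have "peval R emb (pCons c p) a
      = (\<Oplus>i\<in>{..Suc (degree p)}. emb (coeff (pCons c p) i) \<otimes> a [^] i)"
    by (rule peval_upto[OF degree_pCons_le a])
  also have "\<dots> = (\<Oplus>i\<in>{..degree p}. emb (coeff p i) \<otimes> a [^] Suc i) \<oplus> emb c"
    using a by (subst finsum_Suc2) auto
  also have "(\<Oplus>i\<in>{..degree p}. emb (coeff p i) \<otimes> a [^] Suc i)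
      = (\<Oplus>i\<in>{..degree p}. a \<otimes> (emb (coeff p i) \<otimes> a [^] i))"
  proof (rule finsum_cong')
    fix i
    have "emb (coeff p i) \<otimes> a [^] Suc i = (emb (coeff p i) \<otimes> a) \<otimes> a [^] i"
      unfolding nat_pow_Suc2[OF a] using a by (simp add: m_assoc)
    then show "emb (coeff p i) \<otimes> a [^] Suc i = a \<otimes> (emb (coeff p i) \<otimes> a [^] i)"
      using a by (simp add: emb_comm m_assoc)
  qed (use a in auto)
  also have "\<dots> = a \<otimes> peval R emb p a"
    unfolding peval_def using a by (subst finsum_rdistr) auto
  finally show ?thesis using a by (simp add: a_comm)
qed

lemma peval_0 [simp]: "a \<in> carrier R \<Longrightarrow> peval R emb 0 a = \<zero>"
  by (simp add: peval_def)

lemma peval_const [simp]: "a \<in> carrier R \<Longrightarrow> peval R emb [:c:] a = emb c"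
  by (simp add: peval_pCons)

lemma peval_1 [simp]: "a \<in> carrier R \<Longrightarrow> peval R emb 1 a = \<one>"
  by (simp add: one_pCons peval_pCons del: pCons_one)

lemma peval_X [simp]: "a \<in> carrier R \<Longrightarrow> peval R emb [:0, 1:] a = a"
  by (simp add: peval_pCons)

lemma peval_add:
  assumes "a \<in> carrier R"
  shows "peval R emb (p + r) a = peval R emb p a \<oplus> peval R emb r a"
proof (induction p arbitrary: r rule: pCons_induct)
  case 0
  then show ?case using assms by simp
next
  case (pCons c p)
  obtain d r' where r: "r = pCons d r'" by (rule pCons_cases)
  show ?case
    using assms pCons.IH[of r'] unfolding r by (simp add: peval_pCons emb_add r_distr a_ac)
qed

lemma peval_smult:
  assumes "a \<in> carrier R"
  shows "peval R emb (smult c p) a = emb c \<otimes> peval R emb p a"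
proof (induction p rule: pCons_induct)
  case 0
  then show ?case using assms by simp
next
  case (pCons d p)
  have "a \<otimes> (emb c \<otimes> peval R emb p a) = emb c \<otimes> (a \<otimes> peval R emb p a)"
    using assms by (simp add: m_assoc[symmetric] emb_comm[of a c])
  then show ?case using assms pCons.IH by (simp add: peval_pCons emb_mult r_distr)
qed

lemma peval_mult:
  assumes "a \<in> carrier R"
  shows "peval R emb (p * r) a = peval R emb p a \<otimes> peval R emb r a"
proof (induction p rule: pCons_induct)
  case 0
  then show ?case using assms by simp
next
  case (pCons d p)
  have "pCons d p * r = smult d r + pCons 0 (p * r)" by simp
  then show ?case
    using assms pCons.IH by (simp add: peval_pCons peval_add peval_smult l_distr m_assoc)
qed

lemma peval_pcompose:
  assumes "a \<in> carrier R"
  shows "peval R emb (p \<circ>\<^sub>p s) a = peval R emb p (peval R emb s a)"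
  by (induction p rule: pCons_induct)
     (simp_all add: assms pcompose_pCons peval_pCons peval_add peval_mult)

lemma peval_intertwine:
  assumes "a \<in> carrier R" "b \<in> carrier R" "z \<in> carrier R" and az: "a \<otimes> z = z \<otimes> b"
  shows "peval R emb p a \<otimes> z = z \<otimes> peval R emb p b"
proof (induction p rule: pCons_induct)
  case 0
  then show ?case using assms by simp
next
  case (pCons d p)
  have "(emb d \<oplus> a \<otimes> peval R emb p a) \<otimes> z = emb d \<otimes> z \<oplus> a \<otimes> (peval R emb p a \<otimes> z)"
    using assms by (simp add: l_distr m_assoc)
  also have "\<dots> = z \<otimes> emb d \<oplus> (a \<otimes> z) \<otimes> peval R emb p b"
    using assms pCons.IH by (simp add: emb_comm m_assoc[symmetric])
  also have "\<dots> = z \<otimes> (emb d \<oplus> b \<otimes> peval R emb p b)"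
    using assms by (simp add: r_distr m_assoc)
  finally show ?case using assms by (simp add: peval_pCons)
qed

end

locale Hq =
  fixes R :: "'a ring" (structure) and emb :: "'k::field \<Rightarrow> 'a"
    and q :: 'k and f g :: "'k poly" and x y h :: 'a
  assumes Hq: "is_Hq R emb q f g x y h"

sublocale Hq \<subseteq> F_algebra
  using Hq unfolding is_Hq_def F_algebra_def by blast

context Hq
begin

lemma x_closed [simp]: "x \<in> carrier R"
  and y_closed [simp]: "y \<in> carrier R"
  and h_closed [simp]: "h \<in> carrier R"
  and h_x: "h \<otimes> x = x \<otimes> peval R emb f h"
  and y_h: "y \<otimes> h = peval R emb f h \<otimes> y"
  and y_x: "y \<otimes> x = emb q \<otimes> x \<otimes> y \<oplus> peval R emb g h"
  and normal_form_unique: "a \<in> carrier R \<Longrightarrow> \<exists>!P. finite (psupp P) \<and> a = nf R emb x y h P"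
  using Hq unfolding is_Hq_def by blast+

abbreviation ev :: "'k poly \<Rightarrow> 'a" where
  "ev p \<equiv> peval R emb p h"

abbreviation subst_f :: "nat \<Rightarrow> 'k poly \<Rightarrow> 'k poly" where
  "subst_f n p \<equiv> ((\<lambda>p. p \<circ>\<^sub>p f) ^^ n) p"

lemma ev_x: "ev p \<otimes> x = x \<otimes> ev (p \<circ>\<^sub>p f)"
  by (simp add: peval_pcompose peval_intertwine h_x)

lemma y_ev: "y \<otimes> ev p = ev (p \<circ>\<^sub>p f) \<otimes> y"
  using peval_intertwine[of "ev f" h y p] by (simp add: peval_pcompose y_h)

lemma ev_x_pow: "ev p \<otimes> x [^] n = x [^] n \<otimes> ev (subst_f n p)"
proof (induction n arbitrary: p)
  case 0
  then show ?case by simp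
next
  case (Suc n)
  have "ev p \<otimes> x [^] Suc n = (ev p \<otimes> x) \<otimes> x [^] n"
    by (simp only: nat_pow_Suc2[OF x_closed]) (simp add: m_assoc)
  also have "\<dots> = x \<otimes> (ev (p \<circ>\<^sub>p f) \<otimes> x [^] n)"
    by (simp add: ev_x m_assoc)
  also have "\<dots> = x [^] Suc n \<otimes> ev (subst_f (Suc n) p)"
    by (simp only: Suc nat_pow_Suc2[OF x_closed] funpow_Suc_right comp_def)
       (simp add: m_assoc)
  finally show ?case .
qed

lemma y_pow_ev: "y [^] n \<otimes> ev p = ev (subst_f n p) \<otimes> y [^] n"
proof (induction n arbitrary: p)
  case 0
  then show ?case by simp
next
  case (Suc n)
  have "y [^] Suc n \<otimes> ev p = y [^] n \<otimes> ev (p \<circ>\<^sub>p f) \<otimes> y"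
    by (simp add: nat_pow_Suc y_ev m_assoc)
  also have "\<dots> = ev (subst_f (Suc n) p) \<otimes> y [^] Suc n"
    by (simp add: Suc nat_pow_Suc m_assoc funpow_Suc_right del: funpow.simps)
  finally show ?case .
qed

lemma y_x_minus: "y \<otimes> x \<ominus> emb q \<otimes> x \<otimes> y = ev g"
proof -
  have "a \<oplus> b \<ominus> a = b" if "a \<in> carrier R" "b \<in> carrier R" for a b
    using that by algebra
  then show ?thesis unfolding y_x by simp
qed

section \<open>Normal forms and the filtration\<close>

definition pbw :: "nat \<Rightarrow> nat \<Rightarrow> 'k poly \<Rightarrow> 'a" where
  "pbw i j p = x [^] i \<otimes> ev p \<otimes> y [^] j"

lemma pbw_closed [simp]: "pbw i j p \<in> carrier R"
  by (simp add: pbw_def)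

lemma pbw_0 [simp]: "pbw i j 0 = \<zero>"
  by (simp add: pbw_def)

lemma pbw_add: "pbw i j (p + r) = pbw i j p \<oplus> pbw i j r"
  by (simp add: pbw_def peval_add l_distr r_distr)

lemma pbw_uminus: "pbw i j (- p) = \<ominus> pbw i j p"
  using pbw_add[of i j "- p" p] by (simp add: minus_equality)

lemma pbw_diff: "pbw i j (p - r) = pbw i j p \<ominus> pbw i j r"
  using pbw_add[of i j p "- r"] by (simp add: pbw_uminus a_minus_def)

abbreviation NF :: "(nat \<Rightarrow> nat \<Rightarrow> 'k poly) \<Rightarrow> 'a" where
  "NF \<equiv> nf R emb x y h"

abbreviation coef :: "'a \<Rightarrow> nat \<Rightarrow> nat \<Rightarrow> 'k poly" where
  "coef \<equiv> nfcoef R emb x y h"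

lemma NF_eq_finsum:
  assumes "finite A" "psupp P \<subseteq> A"
  shows "NF P = finsum R (\<lambda>(i, j). pbw i j (P i j)) A"
  unfolding nf_def
  by (rule add.finprod_mono_neutral_cong_left) (use assms in \<open>auto simp: psupp_def pbw_def\<close>)

lemma NF_closed [simp]: "NF P \<in> carrier R"
  unfolding nf_def by (rule finsum_closed) auto

lemma psupp_add: "psupp (\<lambda>i j. P i j + Q i j) \<subseteq> psupp P \<union> psupp Q"
  for P Q :: "nat \<Rightarrow> nat \<Rightarrow> 'k poly"
  by (auto simp: psupp_def)

lemma NF_add:
  assumes "finite (psupp P)" "finite (psupp Q)"
  shows "NF P \<oplus> NF Q = NF (\<lambda>i j. P i j + Q i j)"
proof -
  let ?A = "psupp P \<union> psupp Q"
  have "finite ?A" using assms by simp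
  then have "NF P \<oplus> NF Q
      = finsum R (\<lambda>(i, j). pbw i j (P i j)) ?A \<oplus> finsum R (\<lambda>(i, j). pbw i j (Q i j)) ?A"
    using NF_eq_finsum[of ?A P] NF_eq_finsum[of ?A Q] by simp
  also have "\<dots> = (\<Oplus>s\<in>?A. (\<lambda>(i, j). pbw i j (P i j)) s \<oplus> (\<lambda>(i, j). pbw i j (Q i j)) s)"
    by (rule finsum_addf[symmetric]) auto
  also have "\<dots> = finsum R (\<lambda>(i, j). pbw i j (P i j + Q i j)) ?A"
    by (rule finsum_cong') (auto simp: pbw_add)
  also have "\<dots> = NF (\<lambda>i j. P i j + Q i j)"
    using NF_eq_finsum[OF \<open>finite ?A\<close> psupp_add] by simp
  finally show ?thesis .
qed

lemma psupp_single: "psupp (\<lambda>a b. if (a, b) = (i, j) then p else 0) \<subseteq> {(i, j)}"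
  by (auto simp: psupp_def)

lemma NF_single: "NF (\<lambda>a b. if (a, b) = (i, j) then p else 0) = pbw i j p"
  by (subst NF_eq_finsum[of "{(i, j)}"]) (auto simp: psupp_def)

lemma coef_NF: "finite (psupp P) \<Longrightarrow> coef (NF P) = P"
  unfolding nfcoef_def by (rule the1_equality) (use normal_form_unique[OF NF_closed] in auto)

lemma NF_coef:
  assumes "a \<in> carrier R"
  shows "finite (psupp (coef a))" "NF (coef a) = a"
  using theI'[OF normal_form_unique[OF assms]] unfolding nfcoef_def by auto

inductive_set pbw_span :: "(nat \<times> nat) set \<Rightarrow> 'a set" for S where
  zero: "\<zero> \<in> pbw_span S"
| pbw: "(i, j) \<in> S \<Longrightarrow> pbw i j p \<in> pbw_span S"
| add: "a \<in> pbw_span S \<Longrightarrow> b \<in> pbw_span S \<Longrightarrow> a \<oplus> b \<in> pbw_span S"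

lemma pbw_span_closed: "a \<in> pbw_span S \<Longrightarrow> a \<in> carrier R"
  by (induction rule: pbw_span.induct) auto

lemma pbw_span_finsum:
  "finite A \<Longrightarrow> (\<And>i. i \<in> A \<Longrightarrow> F i \<in> pbw_span S) \<Longrightarrow> finsum R F A \<in> pbw_span S"
proof (induction A rule: finite_induct)
  case empty
  then show ?case by (simp add: pbw_span.zero)
next
  case (insert a A)
  then have "F \<in> A \<rightarrow> carrier R" "F a \<in> carrier R" using pbw_span_closed by auto
  with insert show ?case by (simp add: pbw_span.add)
qed

lemma NF_in_pbw_span: "finite (psupp P) \<Longrightarrow> psupp P \<subseteq> S \<Longrightarrow> NF P \<in> pbw_span S"
  by (auto simp: NF_eq_finsum intro!: pbw_span_finsum pbw_span.pbw)

lemma pbw_span_NF: "a \<in> pbw_span S \<Longrightarrow> \<exists>P. finite (psupp P) \<and> psupp P \<subseteq> S \<and> a = NF P"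
proof (induction rule: pbw_span.induct)
  case zero
  show ?case by (rule exI[of _ "\<lambda>i j. 0"]) (simp add: nf_def psupp_def)
next
  case (pbw i j p)
  let ?P = "\<lambda>a b. if (a, b) = (i, j) then p else 0"
  have "finite (psupp ?P)" "psupp ?P \<subseteq> S" "pbw i j p = NF ?P"
    using psupp_single[of i j p] pbw finite_subset by (auto simp only: NF_single)
  then show ?case by blast
next
  case (add a b)
  then obtain P Q where "finite (psupp P)" "psupp P \<subseteq> S" "a = NF P"
      "finite (psupp Q)" "psupp Q \<subseteq> S" "b = NF Q" by blast
  then show ?case
    using NF_add psupp_add[of P Q] finite_subset
    by (intro exI[of _ "\<lambda>i j. P i j + Q i j"]) blast
qed

lemma pbw_span_iff: "a \<in> pbw_span S \<longleftrightarrow> a \<in> carrier R \<and> psupp (coef a) \<subseteq> S"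
proof
  assume "a \<in> pbw_span S"
  then show "a \<in> carrier R \<and> psupp (coef a) \<subseteq> S"
    using pbw_span_NF[of a S] pbw_span_closed coef_NF by auto
next
  assume "a \<in> carrier R \<and> psupp (coef a) \<subseteq> S"
  then show "a \<in> pbw_span S"
    using NF_coef[of a] NF_in_pbw_span[of "coef a" S] by auto
qed

lemma pbw_span_uminus: "a \<in> pbw_span S \<Longrightarrow> \<ominus> a \<in> pbw_span S"
  by (induction rule: pbw_span.induct)
     (auto simp: minus_add pbw_span_closed simp flip: pbw_uminus intro: pbw_span.intros)

lemma pbw_span_diff: "a \<in> pbw_span S \<Longrightarrow> b \<in> pbw_span S \<Longrightarrow> a \<ominus> b \<in> pbw_span S"
  by (simp add: a_minus_def pbw_span.add pbw_span_uminus)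

lemma pbw_span_mono: "S \<subseteq> T \<Longrightarrow> a \<in> pbw_span S \<Longrightarrow> a \<in> pbw_span T"
  by (auto simp: pbw_span_iff)

lemma pbw_span_mult:
  assumes pbw_pbw: "\<And>i j p k l r. (i, j) \<in> S \<Longrightarrow> (k, l) \<in> T \<Longrightarrow> pbw i j p \<otimes> pbw k l r \<in> pbw_span U"
    and "a \<in> pbw_span S" "b \<in> pbw_span T"
  shows "a \<otimes> b \<in> pbw_span U"
  using assms(2)
proof (induction rule: pbw_span.induct)
  case zero
  then show ?case using pbw_span_closed[OF assms(3)] by (simp add: pbw_span.zero)
next
  case (pbw i j p)
  from assms(3) show ?case
    by (induction rule: pbw_span.induct)
       (auto simp: pbw pbw_pbw r_distr pbw_span_closed intro: pbw_span.intros)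
next
  case (add a b')
  then show ?case using pbw_span_closed[OF assms(3)] by (simp add: l_distr pbw_span_closed pbw_span.add)
qed

abbreviation Fil :: "nat \<times> nat \<Rightarrow> 'a set" where
  "Fil d \<equiv> pbw_span {e. e \<le> d}"

abbreviation Fil_less :: "nat \<times> nat \<Rightarrow> 'a set" where
  "Fil_less d \<equiv> pbw_span {e. e < d}"

lemma Deg_le_iff:
  assumes "a \<in> carrier R"
  shows "Deg R emb x y h a \<le> Some d \<longleftrightarrow> psupp (coef a) \<subseteq> {e. e \<le> d}"
    and "Deg R emb x y h a < Some d \<longleftrightarrow> psupp (coef a) \<subseteq> {e. e < d}"
  using NF_coef(1)[OF assms]
  by (cases "psupp (coef a) = {}"; simp add: Deg_def Max_le_iff Max_less_iff subset_eq)+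

lemma Filt_eq: "Filt R emb x y h d = Fil d"
  by (auto simp: Filt_def pbw_span_iff Deg_le_iff)

lemma Filtm_eq: "Filtm R emb x y h d = Fil_less d"
  by (auto simp: Filtm_def pbw_span_iff Deg_le_iff)

lemma Fil_less_subset: "a \<in> Fil_less d \<Longrightarrow> a \<in> Fil d"
  by (rule pbw_span_mono[rotated]) auto

lemma pbw_Fil: "pbw i j p \<in> Fil (i, j)"
  by (simp add: pbw_span.pbw)

lemma ev_Fil: "ev p \<in> Fil (0, 0)"
  using pbw_Fil[of 0 0 p] by (simp add: pbw_def)

lemma one_Fil: "\<one> \<in> Fil (0, 0)"
  using ev_Fil[of 1] by simp

lemma emb_Fil: "emb c \<in> Fil (0, 0)"
  using ev_Fil[of "[:c:]"] by simp

lemma x_Fil: "x \<in> Fil (1, 0)"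
  using pbw_Fil[of 1 0 1] by (simp add: pbw_def nat_pow_Suc)

lemma y_Fil: "y \<in> Fil (0, 1)"
  using pbw_Fil[of 0 1 1] by (simp add: pbw_def nat_pow_Suc)

lemma h_Fil: "h \<in> Fil (0, 0)"
  using ev_Fil[of "[:0, 1:]"] by simp

lemma pbw_leading:
  assumes "a \<in> Fil (i, j)"
  shows "a \<ominus> pbw i j (coef a i j) \<in> Fil_less (i, j)"
proof -
  let ?Q = "coef a"
  let ?Q' = "\<lambda>a b. if (a, b) = (i, j) then 0 else ?Q a b"
  have a: "a \<in> carrier R" using assms by (rule pbw_span_closed)
  have fin: "finite (psupp ?Q')" "finite (psupp (\<lambda>a b. if (a, b) = (i, j) then ?Q i j else 0))"
    using NF_coef(1)[OF a] psupp_single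
    by (auto intro: finite_subset[of _ "psupp ?Q"] finite_subset[of _ "{(i, j)}"] simp: psupp_def)
  have "(\<lambda>a b. ?Q' a b + (if (a, b) = (i, j) then ?Q i j else 0)) = ?Q"
    by (intro ext) simp
  then have "a = NF ?Q' \<oplus> pbw i j (?Q i j)"
    using NF_add[OF fin] NF_coef(2)[OF a] NF_single[of i j "?Q i j"] by simp
  then have "a \<ominus> pbw i j (?Q i j) = NF ?Q' \<oplus> pbw i j (?Q i j) \<ominus> pbw i j (?Q i j)"
    by (rule arg_cong)
  then have "a \<ominus> pbw i j (?Q i j) = NF ?Q'"
    by (simp add: a_minus_def a_assoc r_neg)
  moreover have "psupp ?Q' \<subseteq> {e. e < (i, j)}"
    using assms by (auto simp: pbw_span_iff psupp_def less_le)
  ultimately show ?thesis using fin(1) by (simp add: NF_in_pbw_span)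
qed

lemma pbw_Fil_less_iff: "pbw i j p \<in> Fil_less (i, j) \<longleftrightarrow> p = 0"
proof -
  have "coef (NF (\<lambda>a b. if (a, b) = (i, j) then p else 0)) = (\<lambda>a b. if (a, b) = (i, j) then p else 0)"
    by (rule coef_NF[OF finite_subset[OF psupp_single]]) simp
  then have "coef (pbw i j p) = (\<lambda>a b. if (a, b) = (i, j) then p else 0)"
    by (simp only: NF_single)
  then show ?thesis by (auto simp: pbw_span_iff psupp_def pbw_span.zero)
qed

section \<open>Multiplicativity of the filtration\<close>

lemma pbw_x_left: "pbw i j p = x [^] i \<otimes> pbw 0 j p"
  by (simp add: pbw_def m_assoc)

lemma pbw_y_right: "pbw i j p = pbw i 0 p \<otimes> y [^] j"
  by (simp add: pbw_def)

lemma pbw_mult_x_left: "pbw n 0 p \<otimes> pbw i j r = pbw (n + i) j (subst_f i p * r)"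
proof -
  have "pbw n 0 p \<otimes> pbw i j r = x [^] n \<otimes> (ev p \<otimes> x [^] i) \<otimes> ev r \<otimes> y [^] j"
    by (simp add: pbw_def m_assoc)
  also have "\<dots> = pbw (n + i) j (subst_f i p * r)"
    by (simp add: ev_x_pow pbw_def peval_mult m_assoc nat_pow_mult[symmetric])
  finally show ?thesis .
qed

lemma pbw_mult_y_right: "pbw i j p \<otimes> pbw 0 l r = pbw i (j + l) (p * subst_f j r)"
proof -
  have "pbw i j p \<otimes> pbw 0 l r = x [^] i \<otimes> ev p \<otimes> (y [^] j \<otimes> ev r) \<otimes> y [^] l"
    by (simp add: pbw_def m_assoc)
  also have "\<dots> = pbw i (j + l) (p * subst_f j r)"
    by (simp add: y_pow_ev pbw_def peval_mult m_assoc nat_pow_mult[symmetric])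
  finally show ?thesis .
qed

abbreviation x_below :: "nat \<Rightarrow> 'a set" where
  "x_below k \<equiv> pbw_span {e. fst e < k}"

lemma x_below_mult_x_left: "a \<in> x_below k \<Longrightarrow> pbw n 0 p \<otimes> a \<in> x_below (n + k)"
  by (rule pbw_span_mult[of "{(n, 0)}"]) (auto simp: pbw_mult_x_left intro: pbw_span.pbw)

lemma x_below_mult_y_right: "a \<in> x_below k \<Longrightarrow> a \<otimes> pbw 0 l r \<in> x_below k"
  by (rule pbw_span_mult[of _ "{(0, l)}"]) (auto simp: pbw_mult_y_right intro: pbw_span.pbw)

lemma y_x_pow: "\<exists>c. \<exists>w\<in>x_below k. y \<otimes> x [^] k = pbw k 1 c \<oplus> w"
proof (induction k)
  case 0
  have "y \<otimes> x [^] (0::nat) = pbw 0 1 1 \<oplus> \<zero>"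
    by (simp add: pbw_def nat_pow_Suc)
  then show ?case by (blast intro: pbw_span.zero)
next
  case (Suc k)
  then obtain c w where w: "w \<in> x_below k" "y \<otimes> x [^] k = pbw k 1 c \<oplus> w" by blast
  have w_closed: "w \<in> carrier R" using w(1) by (rule pbw_span_closed)
  have qx: "pbw 1 0 [:q:] = emb q \<otimes> x"
    by (simp add: pbw_def nat_pow_Suc emb_comm)
  \<comment> \<open>the correction term g(h) x^k has x-degree k, one less than the main term\<close>
  have gx: "ev g \<otimes> x [^] k = pbw k 0 (subst_f k g)"
    by (simp add: ev_x_pow pbw_def)
  have "y \<otimes> x [^] Suc k = (y \<otimes> x) \<otimes> x [^] k"
    unfolding nat_pow_Suc2[OF x_closed] by (simp add: m_assoc)
  also have "\<dots> = pbw 1 0 [:q:] \<otimes> (y \<otimes> x [^] k) \<oplus> ev g \<otimes> x [^] k"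
    unfolding qx y_x by (simp add: l_distr m_assoc)
  also have "\<dots> = pbw 1 0 [:q:] \<otimes> pbw k 1 c \<oplus> (pbw 1 0 [:q:] \<otimes> w \<oplus> pbw k 0 (subst_f k g))"
    by (simp add: w(2) gx r_distr w_closed a_assoc)
  finally have "y \<otimes> x [^] Suc k = pbw (Suc k) 1 (subst_f k [:q:] * c)
      \<oplus> (pbw 1 0 [:q:] \<otimes> w \<oplus> pbw k 0 (subst_f k g))"
    by (simp add: pbw_mult_x_left)
  moreover have "pbw 1 0 [:q:] \<otimes> w \<in> x_below (Suc k)"
    using x_below_mult_x_left[OF w(1), of 1 "[:q:]"] by simp
  then have "pbw 1 0 [:q:] \<otimes> w \<oplus> pbw k 0 (subst_f k g) \<in> x_below (Suc k)"
    by (rule pbw_span.add) (simp add: pbw_span.pbw)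
  ultimately show ?case by blast
qed

lemma y_mult_x_below: "w \<in> x_below k \<Longrightarrow> y \<otimes> w \<in> x_below k"
proof (induction rule: pbw_span.induct)
  case zero
  then show ?case by (simp add: pbw_span.zero)
next
  case (pbw a b s)
  then have "a < k" by simp
  obtain c w where w: "w \<in> x_below a" "y \<otimes> x [^] a = pbw a 1 c \<oplus> w" using y_x_pow by blast
  have "y \<otimes> pbw a b s = (y \<otimes> x [^] a) \<otimes> pbw 0 b s"
    by (simp add: pbw_x_left[of a] m_assoc)
  also have "\<dots> = pbw a (1 + b) (c * subst_f 1 s) \<oplus> w \<otimes> pbw 0 b s"
    using pbw_span_closed[OF w(1)] by (simp add: w(2) l_distr pbw_mult_y_right)
  moreover have "w \<otimes> pbw 0 b s \<in> x_below k"
    by (rule pbw_span_mono[OF _ x_below_mult_y_right[OF w(1)]]) (use \<open>a < k\<close> in auto)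
  ultimately show ?case
    using \<open>a < k\<close> by (simp add: pbw_span.add pbw_span.pbw)
next
  case (add u v)
  then show ?case by (simp add: r_distr pbw_span_closed pbw_span.add)
qed

lemma y_pow_x_pow: "\<exists>c. \<exists>w\<in>x_below k. y [^] j \<otimes> x [^] k = pbw k j c \<oplus> w"
proof (induction j)
  case 0
  have "y [^] (0::nat) \<otimes> x [^] k = pbw k 0 1 \<oplus> \<zero>"
    by (simp add: pbw_def)
  then show ?case by (blast intro: pbw_span.zero)
next
  case (Suc j)
  then obtain c w where w: "w \<in> x_below k" "y [^] j \<otimes> x [^] k = pbw k j c \<oplus> w" by blast
  obtain c' w' where w': "w' \<in> x_below k" "y \<otimes> x [^] k = pbw k 1 c' \<oplus> w'" using y_x_pow by blast
  have closed: "w \<in> carrier R" "w' \<in> carrier R" using w(1) w'(1) pbw_span_closed by auto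
  have "y [^] Suc j \<otimes> x [^] k = y \<otimes> (pbw k j c \<oplus> w)"
    unfolding nat_pow_Suc2[OF y_closed] by (simp add: m_assoc w(2)[symmetric])
  also have "\<dots> = (y \<otimes> x [^] k) \<otimes> pbw 0 j c \<oplus> y \<otimes> w"
    using closed by (simp add: r_distr m_assoc pbw_x_left[of k])
  also have "\<dots> = pbw k (Suc j) (c' * subst_f 1 c) \<oplus> (w' \<otimes> pbw 0 j c \<oplus> y \<otimes> w)"
    using closed by (simp add: w'(2) l_distr a_assoc pbw_mult_y_right)
  finally show ?case
    using x_below_mult_y_right[OF w'(1)] y_mult_x_below[OF w(1)] by (blast intro: pbw_span.add)
qed

lemma pbw_mult: "pbw i j p \<otimes> pbw k l r \<in> Fil ((i, j) + (k, l))"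
proof -
  obtain c w where w: "w \<in> x_below k" "y [^] j \<otimes> x [^] k = pbw k j c \<oplus> w" using y_pow_x_pow by blast
  have closed: "w \<in> carrier R" using w(1) by (rule pbw_span_closed)
  have "pbw i j p \<otimes> pbw k l r = pbw i 0 p \<otimes> (y [^] j \<otimes> x [^] k) \<otimes> pbw 0 l r"
    by (simp add: pbw_y_right[of i j] pbw_x_left[of k] m_assoc)
  also have "\<dots> = pbw i 0 p \<otimes> pbw k j c \<otimes> pbw 0 l r \<oplus> pbw i 0 p \<otimes> w \<otimes> pbw 0 l r"
    using closed by (simp add: w(2) l_distr r_distr)
  finally have split: "pbw i j p \<otimes> pbw k l r
      = pbw i 0 p \<otimes> pbw k j c \<otimes> pbw 0 l r \<oplus> pbw i 0 p \<otimes> w \<otimes> pbw 0 l r" .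
  have "pbw i 0 p \<otimes> pbw k j c \<otimes> pbw 0 l r \<in> Fil ((i, j) + (k, l))"
    by (simp add: pbw_mult_x_left pbw_mult_y_right pbw_span.pbw)
  moreover have "pbw i 0 p \<otimes> w \<otimes> pbw 0 l r \<in> Fil ((i, j) + (k, l))"
    using x_below_mult_y_right[OF x_below_mult_x_left[OF w(1)]]
    by (rule pbw_span_mono[rotated]) auto
  ultimately show ?thesis unfolding split by (rule pbw_span.add)
qed

lemma Fil_mult: "a \<in> Fil d1 \<Longrightarrow> b \<in> Fil d2 \<Longrightarrow> a \<otimes> b \<in> Fil (d1 + d2)"
  by (rule pbw_span_mult)
     (auto intro: pbw_span_mono[OF _ pbw_mult] dest: add_mono_lex order_trans)

lemma Fil_less_mult_left: "a \<in> Fil_less d1 \<Longrightarrow> b \<in> Fil d2 \<Longrightarrow> a \<otimes> b \<in> Fil_less (d1 + d2)"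
  by (rule pbw_span_mult)
     (auto intro: pbw_span_mono[OF _ pbw_mult] dest: add_strict_left_mono_lex le_less_trans)

lemma Fil_less_mult_right: "a \<in> Fil d1 \<Longrightarrow> b \<in> Fil_less d2 \<Longrightarrow> a \<otimes> b \<in> Fil_less (d1 + d2)"
  by (rule pbw_span_mult)
     (auto intro: pbw_span_mono[OF _ pbw_mult] dest: add_strict_right_mono_lex le_less_trans)

lemma Fil_pow: "a \<in> Fil d \<Longrightarrow> a [^] n \<in> Fil (n * fst d, n * snd d)"
proof (induction n)
  case 0
  then show ?case by (simp add: one_Fil)
next
  case (Suc n)
  then have "a [^] n \<otimes> a \<in> Fil ((n * fst d, n * snd d) + d)" by (intro Fil_mult)
  then show ?case by (cases d) (simp add: nat_pow_Suc add.commute)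
qed

section \<open>The associated graded ring\<close>

abbreviation cls :: "nat \<times> nat \<Rightarrow> 'a \<Rightarrow> 'a set" where
  "cls \<equiv> grcls R emb x y h"

lemma mem_cls_iff:
  assumes "a \<in> carrier R"
  shows "c \<in> cls d a \<longleftrightarrow> c \<in> carrier R \<and> c \<ominus> a \<in> Fil_less d"
proof
  assume "c \<in> cls d a"
  then obtain b where b: "b \<in> Fil_less d" "c = a \<oplus> b"
    by (auto simp: grcls_def Filtm_eq)
  moreover have "b \<in> carrier R" using b(1) by (rule pbw_span_closed)
  moreover have "a \<oplus> b \<ominus> a = b" if "b \<in> carrier R" using that assms by algebra
  ultimately show "c \<in> carrier R \<and> c \<ominus> a \<in> Fil_less d"
    using assms by simp
next
  assume "c \<in> carrier R \<and> c \<ominus> a \<in> Fil_less d"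
  moreover have "c = a \<oplus> (c \<ominus> a)" if "c \<in> carrier R" using that assms by algebra
  ultimately show "c \<in> cls d a" by (auto simp: grcls_def Filtm_eq)
qed

lemma cls_eq_iff:
  assumes "a \<in> carrier R" "b \<in> carrier R"
  shows "cls d a = cls d b \<longleftrightarrow> a \<ominus> b \<in> Fil_less d"
proof
  have "a \<ominus> a \<in> Fil_less d" using assms by (simp add: a_minus_def r_neg pbw_span.zero)
  then have "a \<in> cls d a" using assms by (simp add: mem_cls_iff)
  moreover assume "cls d a = cls d b"
  ultimately show "a \<ominus> b \<in> Fil_less d" using assms by (simp add: mem_cls_iff)
next
  assume ab: "a \<ominus> b \<in> Fil_less d"
  have "c \<ominus> a \<in> Fil_less d \<longleftrightarrow> c \<ominus> b \<in> Fil_less d" if "c \<in> carrier R" for c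
  proof -
    have "c \<ominus> b = (c \<ominus> a) \<oplus> (a \<ominus> b)" "c \<ominus> a = (c \<ominus> b) \<ominus> (a \<ominus> b)"
      using that assms by algebra+
    then show ?thesis using ab by (metis pbw_span.add pbw_span_diff)
  qed
  then show "cls d a = cls d b" using assms by (auto simp: mem_cls_iff)
qed

lemma cls_zero: "cls d \<zero> = Fil_less d"
  by (auto simp: grcls_def Filtm_eq pbw_span_closed) (metis l_zero pbw_span_closed)

lemma cls_eq_zero_iff: "a \<in> carrier R \<Longrightarrow> cls d a = Fil_less d \<longleftrightarrow> a \<in> Fil_less d"
  using cls_eq_iff[of a \<zero> d] by (simp add: cls_zero a_minus_def)

lemma rep_cls: "a \<in> carrier R \<Longrightarrow> rep (cls d a) \<in> cls d a"
  unfolding rep_def by (rule someI[of _ a]) (simp add: mem_cls_iff a_minus_def r_neg pbw_span.zero)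

lemma cls_rep: "a \<in> carrier R \<Longrightarrow> cls d (rep (cls d a)) = cls d a"
  using rep_cls[of a d] by (simp add: mem_cls_iff cls_eq_iff)

lemma rep_cls_Fil:
  assumes "a \<in> Fil d"
  shows "rep (cls d a) \<in> Fil d"
proof -
  have a: "a \<in> carrier R" using assms by (rule pbw_span_closed)
  then have r: "rep (cls d a) \<in> carrier R" "rep (cls d a) \<ominus> a \<in> Fil_less d"
    using rep_cls[OF a, of d] by (simp_all add: mem_cls_iff)
  have "rep (cls d a) = (rep (cls d a) \<ominus> a) \<oplus> a" using r(1) a by algebra
  then show ?thesis using Fil_less_subset[OF r(2)] assms by (metis pbw_span.add)
qed

lemma cls_add:
  assumes "a \<in> carrier R" "a' \<in> carrier R" "b \<in> carrier R" "b' \<in> carrier R"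
    and "cls d a = cls d a'" "cls d b = cls d b'"
  shows "cls d (a \<oplus> b) = cls d (a' \<oplus> b')"
proof -
  have "(a \<oplus> b) \<ominus> (a' \<oplus> b') = (a \<ominus> a') \<oplus> (b \<ominus> b')" using assms(1-4) by algebra
  then show ?thesis using assms by (simp add: cls_eq_iff pbw_span.add)
qed

lemma cls_mult:
  assumes "a \<in> Fil d1" "a' \<in> Fil d1" "b \<in> Fil d2" "b' \<in> Fil d2"
    and "cls d1 a = cls d1 a'" "cls d2 b = cls d2 b'"
  shows "cls (d1 + d2) (a \<otimes> b) = cls (d1 + d2) (a' \<otimes> b')"
proof -
  have c: "a \<in> carrier R" "a' \<in> carrier R" "b \<in> carrier R" "b' \<in> carrier R"
    using assms(1-4) pbw_span_closed by auto
  have "(a \<ominus> a') \<otimes> b \<in> Fil_less (d1 + d2)" "a' \<otimes> (b \<ominus> b') \<in> Fil_less (d1 + d2)"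
    using assms c by (auto simp: cls_eq_iff intro: Fil_less_mult_left Fil_less_mult_right)
  moreover have "a \<otimes> b \<ominus> a' \<otimes> b' = (a \<ominus> a') \<otimes> b \<oplus> a' \<otimes> (b \<ominus> b')" using c by algebra
  ultimately show ?thesis using c by (simp add: cls_eq_iff pbw_span.add)
qed

lemma cls_finsum:
  assumes "finite A" "F \<in> A \<rightarrow> carrier R" "F' \<in> A \<rightarrow> carrier R"
    and "\<And>s. s \<in> A \<Longrightarrow> cls d (F s) = cls d (F' s)"
  shows "cls d (finsum R F A) = cls d (finsum R F' A)"
  using assms
proof (induction A rule: finite_induct)
  case empty
  then show ?case by simp
next
  case (insert a A)
  then show ?case by (simp add: cls_add)
qed

abbreviation GR :: "(nat \<times> nat \<Rightarrow> 'a set) ring" where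
  "GR \<equiv> Gr R emb x y h"

abbreviation ghom :: "nat \<times> nat \<Rightarrow> 'a \<Rightarrow> nat \<times> nat \<Rightarrow> 'a set" where
  "ghom \<equiv> gr_hom R emb x y h"

lemma GR_simps:
  "carrier GR = gr_carrier R emb x y h" "(\<otimes>\<^bsub>GR\<^esub>) = gr_mul R emb x y h"
  "\<one>\<^bsub>GR\<^esub> = ghom (0, 0) \<one>" "\<zero>\<^bsub>GR\<^esub> = gr_zero R emb x y h" "(\<oplus>\<^bsub>GR\<^esub>) = gr_add R emb x y h"
  by (simp_all add: Gr_def)

(* An element of Gr is described by a family u of representatives u d in F_d: sums and products
   of classes only depend on representatives modulo F^-_d, so the choice function rep drops out. *)
definition gr_of :: "(nat \<times> nat \<Rightarrow> 'a) \<Rightarrow> nat \<times> nat \<Rightarrow> 'a set" where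
  "gr_of u = (\<lambda>d. cls d (u d))"

definition gr_family :: "(nat \<times> nat \<Rightarrow> 'a) \<Rightarrow> bool" where
  "gr_family u \<longleftrightarrow> (\<forall>d. u d \<in> Fil d) \<and> finite {d. u d \<notin> Fil_less d}"

lemma gr_family_Fil: "gr_family u \<Longrightarrow> u d \<in> Fil d"
  unfolding gr_family_def by blast

lemma gr_family_closed: "gr_family u \<Longrightarrow> u d \<in> carrier R"
  using gr_family_Fil pbw_span_closed by blast

lemma carrier_GR: "carrier GR = gr_of ` {u. gr_family u}"
proof (intro subset_antisym subsetI)
  fix G assume "G \<in> carrier GR"
  then have "\<forall>d. \<exists>a. a \<in> Fil d \<and> G d = cls d a" and fin: "finite {d. G d \<noteq> Fil_less d}"
    unfolding GR_simps gr_carrier_def Filt_eq Filtm_eq by blast+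
  then obtain u where u: "\<And>d. u d \<in> Fil d" "\<And>d. G d = cls d (u d)" by metis
  have "cls d (u d) = Fil_less d \<longleftrightarrow> u d \<in> Fil_less d" for d
    using pbw_span_closed[OF u(1)] by (rule cls_eq_zero_iff)
  then have "{d. u d \<notin> Fil_less d} = {d. G d \<noteq> Fil_less d}"
    using u(2) by simp
  with u fin have "gr_family u" "G = gr_of u" by (auto simp: gr_family_def gr_of_def)
  then show "G \<in> gr_of ` {u. gr_family u}" by blast
next
  fix G assume "G \<in> gr_of ` {u. gr_family u}"
  then obtain u where u: "gr_family u" "G = gr_of u" by blast
  then have "{d. G d \<noteq> Fil_less d} = {d. u d \<notin> Fil_less d}"
    by (simp add: gr_of_def cls_eq_zero_iff gr_family_closed)
  with u show "G \<in> carrier GR"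
    by (auto simp: GR_simps gr_carrier_def Filt_eq Filtm_eq gr_of_def gr_family_def)
qed

lemma GR_carrierE:
  assumes "G \<in> carrier GR"
  obtains u where "gr_family u" "G = gr_of u"
  using assms by (auto simp: carrier_GR)

lemma gr_of_carrier: "gr_family u \<Longrightarrow> gr_of u \<in> carrier GR"
  by (simp add: carrier_GR)

lemma gr_of_eqI:
  assumes "\<And>d. u d \<in> carrier R" "\<And>d. v d \<in> carrier R" "\<And>d. u d \<ominus> v d \<in> Fil_less d"
  shows "gr_of u = gr_of v"
  unfolding gr_of_def by (rule ext) (simp add: assms cls_eq_iff)

lemma GR_zero_eq: "\<zero>\<^bsub>GR\<^esub> = gr_of (\<lambda>_. \<zero>)"
  by (simp add: GR_simps gr_zero_def gr_of_def Filtm_eq cls_zero)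

lemma GR_one_eq: "\<one>\<^bsub>GR\<^esub> = ghom (0, 0) \<one>"
  by (simp add: GR_simps)

lemma ghom_eq_gr_of: "ghom d a = gr_of (\<lambda>e. if e = d then a else \<zero>)"
  unfolding gr_hom_def gr_of_def by (rule ext) (simp add: Filtm_eq cls_zero)

lemma GR_add_gr_of:
  assumes "\<And>d. u d \<in> carrier R" "\<And>d. v d \<in> carrier R"
  shows "gr_of u \<oplus>\<^bsub>GR\<^esub> gr_of v = gr_of (\<lambda>d. u d \<oplus> v d)"
  unfolding GR_simps
proof
  fix d
  have "rep (cls d (u d)) \<in> carrier R" "rep (cls d (v d)) \<in> carrier R"
    using rep_cls assms by (auto simp: mem_cls_iff)
  then show "gr_add R emb x y h (gr_of u) (gr_of v) d = gr_of (\<lambda>d. u d \<oplus> v d) d"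
    unfolding gr_add_def gr_of_def by (intro cls_add) (simp_all add: assms cls_rep)
qed

definition splits :: "nat \<times> nat \<Rightarrow> ((nat \<times> nat) \<times> (nat \<times> nat)) set" where
  "splits d = {(d1, d2). d1 + d2 = d}"

lemma finite_splits: "finite (splits d)"
proof -
  have "splits d \<subseteq> ({..fst d} \<times> {..snd d}) \<times> ({..fst d} \<times> {..snd d})"
    by (auto simp: splits_def)
  then show ?thesis by (rule finite_subset) auto
qed

definition convolution :: "(nat \<times> nat \<Rightarrow> 'a) \<Rightarrow> (nat \<times> nat \<Rightarrow> 'a) \<Rightarrow> nat \<times> nat \<Rightarrow> 'a" where
  "convolution u v d = finsum R (\<lambda>(d1, d2). u d1 \<otimes> v d2) (splits d)"

lemma GR_mult_gr_of:
  assumes "gr_family u" "gr_family v"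
  shows "gr_of u \<otimes>\<^bsub>GR\<^esub> gr_of v = gr_of (convolution u v)"
  unfolding GR_simps
proof
  fix d :: "nat \<times> nat"
  obtain a b where d: "d = (a, b)" by fastforce
  have closed: "u e \<in> carrier R" "v e \<in> carrier R"
    "rep (cls e (u e)) \<in> carrier R" "rep (cls e (v e)) \<in> carrier R" for e
    using assms gr_family_closed rep_cls by (simp_all add: mem_cls_iff)
  have "{((a1, b1), (a2, b2)). a1 + a2 = a \<and> b1 + b2 = b} = splits (a, b)"
    by (auto simp: splits_def)
  then have "gr_mul R emb x y h (gr_of u) (gr_of v) d
      = cls d (finsum R (\<lambda>(d1, d2). rep (cls d1 (u d1)) \<otimes> rep (cls d2 (v d2))) (splits d))"
    unfolding d gr_mul_def gr_of_def by (simp add: case_prod_unfold)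
  also have "\<dots> = cls d (convolution u v d)"
    unfolding convolution_def
  proof (rule cls_finsum[OF finite_splits])
    fix s assume "s \<in> splits d"
    then obtain d1 d2 where s: "s = (d1, d2)" "d1 + d2 = d" by (auto simp: splits_def)
    have "u d1 \<in> Fil d1" "v d2 \<in> Fil d2" using assms by (simp_all add: gr_family_Fil)
    then show "cls d ((\<lambda>(d1, d2). rep (cls d1 (u d1)) \<otimes> rep (cls d2 (v d2))) s)
        = cls d ((\<lambda>(d1, d2). u d1 \<otimes> v d2) s)"
      unfolding s(1) prod.case s(2)[symmetric]
      by (intro cls_mult rep_cls_Fil cls_rep pbw_span_closed)
  qed (auto simp: closed)
  finally show "gr_mul R emb x y h (gr_of u) (gr_of v) d = gr_of (convolution u v) d"
    by (simp add: gr_of_def)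
qed

lemma gr_family_zero: "gr_family (\<lambda>_. \<zero>)"
  by (simp add: gr_family_def pbw_span.zero)

lemma gr_family_single: "a \<in> Fil d \<Longrightarrow> gr_family (\<lambda>e. if e = d then a else \<zero>)"
  unfolding gr_family_def
  by (auto simp: pbw_span.zero intro: finite_subset[of _ "{d}"])

lemma gr_family_add:
  assumes "gr_family u" "gr_family v"
  shows "gr_family (\<lambda>d. u d \<oplus> v d)"
proof -
  have "{d. u d \<oplus> v d \<notin> Fil_less d} \<subseteq> {d. u d \<notin> Fil_less d} \<union> {d. v d \<notin> Fil_less d}"
    by (auto intro: pbw_span.add)
  then show ?thesis using assms
    by (auto simp: gr_family_def intro: pbw_span.add finite_subset)
qed

lemma gr_family_uminus:
  assumes "gr_family u"
  shows "gr_family (\<lambda>d. \<ominus> u d)"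
proof -
  have "{d. \<ominus> u d \<notin> Fil_less d} \<subseteq> {d. u d \<notin> Fil_less d}"
    by (auto intro: pbw_span_uminus)
  then show ?thesis
    using assms unfolding gr_family_def by (blast intro: pbw_span_uminus finite_subset)
qed

lemma gr_family_convolution:
  assumes u: "gr_family u" and v: "gr_family v"
  shows "gr_family (convolution u v)"
  unfolding gr_family_def
proof (intro conjI allI)
  fix d
  show "convolution u v d \<in> Fil d"
    unfolding convolution_def
    by (rule pbw_span_finsum[OF finite_splits])
       (auto simp: splits_def intro: Fil_mult gr_family_Fil[OF u] gr_family_Fil[OF v])
next
  let ?U = "{d. u d \<notin> Fil_less d}" and ?V = "{d. v d \<notin> Fil_less d}"
  have "convolution u v d \<in> Fil_less d" if "d \<notin> (\<lambda>(d1, d2). d1 + d2) ` (?U \<times> ?V)" for d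
    unfolding convolution_def
  proof (rule pbw_span_finsum[OF finite_splits])
    fix s assume "s \<in> splits d"
    then obtain d1 d2 where s: "s = (d1, d2)" "d1 + d2 = d" by (auto simp: splits_def)
    then have "u d1 \<in> Fil_less d1 \<or> v d2 \<in> Fil_less d2" using that by blast
    then show "(\<lambda>(d1, d2). u d1 \<otimes> v d2) s \<in> Fil_less d"
      unfolding s(1) prod.case s(2)[symmetric]
      using Fil_less_mult_left[OF _ gr_family_Fil[OF v]] Fil_less_mult_right[OF gr_family_Fil[OF u]]
      by blast
  qed
  then have "{d. convolution u v d \<notin> Fil_less d} \<subseteq> (\<lambda>(d1, d2). d1 + d2) ` (?U \<times> ?V)"
    by blast
  moreover have "finite ((\<lambda>(d1, d2). d1 + d2) ` (?U \<times> ?V))"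
    using u v by (simp add: gr_family_def)
  ultimately show "finite {d. convolution u v d \<notin> Fil_less d}" by (rule finite_subset)
qed

lemma convolution_add_left:
  assumes "\<And>d. u d \<in> carrier R" "\<And>d. v d \<in> carrier R" "\<And>d. w d \<in> carrier R"
  shows "convolution (\<lambda>d. u d \<oplus> v d) w = (\<lambda>d. convolution u w d \<oplus> convolution v w d)"
  unfolding convolution_def
  by (subst finsum_addf[symmetric]) (auto simp: assms l_distr intro!: finsum_cong')

lemma convolution_add_right:
  assumes "\<And>d. u d \<in> carrier R" "\<And>d. v d \<in> carrier R" "\<And>d. w d \<in> carrier R"
  shows "convolution w (\<lambda>d. u d \<oplus> v d) = (\<lambda>d. convolution w u d \<oplus> convolution w v d)"
  unfolding convolution_def
  by (subst finsum_addf[symmetric]) (auto simp: assms r_distr intro!: finsum_cong')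

lemma convolution_single:
  assumes "a \<in> carrier R" "b \<in> carrier R"
  shows "convolution (\<lambda>e. if e = d1 then a else \<zero>) (\<lambda>e. if e = d2 then b else \<zero>)
    = (\<lambda>d. if d = d1 + d2 then a \<otimes> b else \<zero>)"
proof
  fix d
  have "convolution (\<lambda>e. if e = d1 then a else \<zero>) (\<lambda>e. if e = d2 then b else \<zero>) d
      = (\<Oplus>s\<in>splits d. if (d1, d2) = s then a \<otimes> b else \<zero>)"
    unfolding convolution_def
  proof (rule finsum_cong')
    fix s :: "(nat \<times> nat) \<times> nat \<times> nat"
    obtain e1 e2 where s: "s = (e1, e2)" by (cases s)
    show "(\<lambda>(e1, e2). (if e1 = d1 then a else \<zero>) \<otimes> (if e2 = d2 then b else \<zero>)) s
        = (if (d1, d2) = s then a \<otimes> b else \<zero>)"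
      unfolding s by (cases "e1 = d1"; cases "e2 = d2") (auto simp: assms)
  qed (auto simp: assms)
  also have "\<dots> = (if d = d1 + d2 then a \<otimes> b else \<zero>)"
  proof (cases "d = d1 + d2")
    case True
    then show ?thesis
      using assms finite_splits by (simp add: splits_def add.finprod_singleton)
  next
    case False
    then have "(if (d1, d2) = s then a \<otimes> b else \<zero>) = \<zero>" if "s \<in> splits d" for s
      using that by (auto simp: splits_def)
    then show ?thesis using False by (simp add: add.finprod_one_eqI)
  qed
  finally show "convolution (\<lambda>e. if e = d1 then a else \<zero>) (\<lambda>e. if e = d2 then b else \<zero>) d
      = (if d = d1 + d2 then a \<otimes> b else \<zero>)" .
qed

lemma GR_add_family:
  "gr_family u \<Longrightarrow> gr_family v \<Longrightarrow> gr_of u \<oplus>\<^bsub>GR\<^esub> gr_of v = gr_of (\<lambda>d. u d \<oplus> v d)"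
  by (rule GR_add_gr_of) (auto intro: gr_family_closed)

lemma GR_abelian_group: "abelian_group GR"
proof (rule abelian_groupI)
  fix G H assume "G \<in> carrier GR" "H \<in> carrier GR"
  then obtain u v where "gr_family u" "G = gr_of u" "gr_family v" "H = gr_of v"
    by (elim GR_carrierE)
  then show "G \<oplus>\<^bsub>GR\<^esub> H \<in> carrier GR" "G \<oplus>\<^bsub>GR\<^esub> H = H \<oplus>\<^bsub>GR\<^esub> G"
    by (simp_all add: GR_add_family gr_family_add gr_of_carrier a_comm gr_family_closed)
next
  fix G H K assume "G \<in> carrier GR" "H \<in> carrier GR" "K \<in> carrier GR"
  then obtain u v w where "gr_family u" "G = gr_of u" "gr_family v" "H = gr_of v"
      "gr_family w" "K = gr_of w"
    by (elim GR_carrierE)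
  then show "G \<oplus>\<^bsub>GR\<^esub> H \<oplus>\<^bsub>GR\<^esub> K = G \<oplus>\<^bsub>GR\<^esub> (H \<oplus>\<^bsub>GR\<^esub> K)"
    by (simp add: GR_add_family gr_family_add a_assoc gr_family_closed)
next
  show "\<zero>\<^bsub>GR\<^esub> \<in> carrier GR"
    by (simp add: GR_zero_eq gr_of_carrier gr_family_zero)
next
  fix G assume "G \<in> carrier GR"
  then obtain u where u: "gr_family u" "G = gr_of u" by (elim GR_carrierE)
  then show "\<zero>\<^bsub>GR\<^esub> \<oplus>\<^bsub>GR\<^esub> G = G"
    by (simp add: GR_zero_eq GR_add_family gr_family_zero gr_family_closed)
  have "gr_of (\<lambda>d. \<ominus> u d) \<oplus>\<^bsub>GR\<^esub> G = \<zero>\<^bsub>GR\<^esub>"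
    using u by (simp add: GR_zero_eq GR_add_family gr_family_uminus l_neg gr_family_closed)
  moreover have "gr_of (\<lambda>d. \<ominus> u d) \<in> carrier GR"
    using u by (simp add: gr_of_carrier gr_family_uminus)
  ultimately show "\<exists>H\<in>carrier GR. H \<oplus>\<^bsub>GR\<^esub> G = \<zero>\<^bsub>GR\<^esub>" by blast
qed

interpretation GR: abelian_group GR
  by (rule GR_abelian_group)

lemma GR_mult_closed: "G \<in> carrier GR \<Longrightarrow> H \<in> carrier GR \<Longrightarrow> G \<otimes>\<^bsub>GR\<^esub> H \<in> carrier GR"
  by (auto elim!: GR_carrierE simp: GR_mult_gr_of gr_of_carrier gr_family_convolution)

lemma GR_l_distr:
  assumes "G \<in> carrier GR" "H \<in> carrier GR" "K \<in> carrier GR"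
  shows "(G \<oplus>\<^bsub>GR\<^esub> H) \<otimes>\<^bsub>GR\<^esub> K = G \<otimes>\<^bsub>GR\<^esub> K \<oplus>\<^bsub>GR\<^esub> H \<otimes>\<^bsub>GR\<^esub> K"
proof -
  obtain u v w where uvw: "gr_family u" "gr_family v" "gr_family w"
    and "G = gr_of u" "H = gr_of v" "K = gr_of w"
    using assms by (elim GR_carrierE)
  then show ?thesis
    by (simp add: GR_add_family GR_mult_gr_of gr_family_add gr_family_convolution
        convolution_add_left gr_family_closed)
qed

lemma GR_r_distr:
  assumes "G \<in> carrier GR" "H \<in> carrier GR" "K \<in> carrier GR"
  shows "K \<otimes>\<^bsub>GR\<^esub> (G \<oplus>\<^bsub>GR\<^esub> H) = K \<otimes>\<^bsub>GR\<^esub> G \<oplus>\<^bsub>GR\<^esub> K \<otimes>\<^bsub>GR\<^esub> H"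
proof -
  obtain u v w where uvw: "gr_family u" "gr_family v" "gr_family w"
    and "G = gr_of u" "H = gr_of v" "K = gr_of w"
    using assms by (elim GR_carrierE)
  then show ?thesis
    by (simp add: GR_add_family GR_mult_gr_of gr_family_add gr_family_convolution
        convolution_add_right gr_family_closed)
qed

lemma ghom_closed: "a \<in> Fil d \<Longrightarrow> ghom d a \<in> carrier GR"
  by (simp add: ghom_eq_gr_of gr_of_carrier gr_family_single)

lemma ghom_zero: "ghom d \<zero> = \<zero>\<^bsub>GR\<^esub>"
  by (simp add: ghom_eq_gr_of GR_zero_eq)

lemma ghom_add:
  assumes "a \<in> Fil d" "b \<in> Fil d"
  shows "ghom d a \<oplus>\<^bsub>GR\<^esub> ghom d b = ghom d (a \<oplus> b)"
  unfolding ghom_eq_gr_of using assms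
  by (subst GR_add_family) (auto simp: gr_family_single intro!: arg_cong[where f = gr_of])

lemma ghom_mult:
  assumes "a \<in> Fil d1" "b \<in> Fil d2"
  shows "ghom d1 a \<otimes>\<^bsub>GR\<^esub> ghom d2 b = ghom (d1 + d2) (a \<otimes> b)"
  using assms pbw_span_closed
  by (simp add: ghom_eq_gr_of GR_mult_gr_of gr_family_single convolution_single)

lemma ghom_cong:
  assumes "a \<in> carrier R" "b \<in> carrier R" "a \<ominus> b \<in> Fil_less d"
  shows "ghom d a = ghom d b"
  unfolding ghom_eq_gr_of
  by (rule gr_of_eqI) (use assms in \<open>auto simp: a_minus_def r_neg pbw_span.zero\<close>)

lemma finsum_ghom:
  assumes "finite A" "\<And>d. d \<in> A \<Longrightarrow> u d \<in> Fil d"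
  shows "finsum GR (\<lambda>d. ghom d (u d)) A = gr_of (\<lambda>d. if d \<in> A then u d else \<zero>)"
  using assms
proof (induction A rule: finite_induct)
  case empty
  then show ?case by (simp add: GR_zero_eq)
next
  case (insert a A)
  have "finsum GR (\<lambda>d. ghom d (u d)) (insert a A)
      = ghom a (u a) \<oplus>\<^bsub>GR\<^esub> gr_of (\<lambda>d. if d \<in> A then u d else \<zero>)"
    using insert by (simp add: ghom_closed)
  also have "\<dots> = gr_of (\<lambda>d. if d \<in> insert a A then u d else \<zero>)"
  proof -
    have closed: "u d \<in> carrier R" if "d \<in> insert a A" for d
      using insert.prems that by (blast intro: pbw_span_closed)
    have "(\<lambda>d. (if d = a then u a else \<zero>) \<oplus> (if d \<in> A then u d else \<zero>))
        = (\<lambda>d. if d \<in> insert a A then u d else \<zero>)"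
    proof
      fix d
      show "(if d = a then u a else \<zero>) \<oplus> (if d \<in> A then u d else \<zero>)
          = (if d \<in> insert a A then u d else \<zero>)"
        using closed[of d] insert.hyps by (cases "d = a"; cases "d \<in> A") auto
    qed
    then show ?thesis
      unfolding ghom_eq_gr_of using closed by (subst GR_add_gr_of) auto
  qed
  finally show ?case .
qed

lemma gr_of_eq_finsum_ghom:
  assumes u: "gr_family u"
  shows "gr_of u = finsum GR (\<lambda>d. ghom d (u d)) {d. u d \<notin> Fil_less d}"
proof -
  let ?S = "{d. u d \<notin> Fil_less d}"
  have "gr_of u = gr_of (\<lambda>d. if d \<in> ?S then u d else \<zero>)"
  proof (rule gr_of_eqI)
    fix d
    show "u d \<in> carrier R" "(if d \<in> ?S then u d else \<zero>) \<in> carrier R"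
      using gr_family_closed[OF u] by simp_all
    show "u d \<ominus> (if d \<in> ?S then u d else \<zero>) \<in> Fil_less d"
      using gr_family_closed[OF u, of d]
      by (cases "d \<in> ?S") (simp_all add: a_minus_def r_neg pbw_span.zero)
  qed
  moreover have "finite ?S"
    using u by (simp add: gr_family_def)
  ultimately show ?thesis
    using gr_family_Fil[OF u] by (simp add: finsum_ghom)
qed

lemma GR_induct [consumes 1, case_names hom add]:
  assumes "G \<in> carrier GR"
    and hom: "\<And>d a. a \<in> Fil d \<Longrightarrow> P (ghom d a)"
    and add: "\<And>G H. G \<in> carrier GR \<Longrightarrow> H \<in> carrier GR \<Longrightarrow> P G \<Longrightarrow> P H \<Longrightarrow> P (G \<oplus>\<^bsub>GR\<^esub> H)"
  shows "P G"
proof -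
  obtain u where u: "gr_family u" "G = gr_of u" using assms(1) by (elim GR_carrierE)
  have hom_closed: "ghom d (u d) \<in> carrier GR" for d
    by (rule ghom_closed[OF gr_family_Fil[OF u(1)]])
  have "P (finsum GR (\<lambda>d. ghom d (u d)) A)" if "finite A" for A
    using that
  proof (induction A rule: finite_induct)
    case empty
    show ?case using hom[OF pbw_span.zero, of "(0, 0)"] by (simp add: ghom_zero)
  next
    case (insert a A)
    then have "finsum GR (\<lambda>d. ghom d (u d)) (insert a A)
        = ghom a (u a) \<oplus>\<^bsub>GR\<^esub> finsum GR (\<lambda>d. ghom d (u d)) A"
      using hom_closed by simp
    then show ?case
      using add[OF hom_closed GR.finsum_closed hom[OF gr_family_Fil[OF u(1)]] insert.IH] hom_closed
      by simp
  qed
  moreover have "finite {d. u d \<notin> Fil_less d}"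
    using u(1) by (simp add: gr_family_def)
  ultimately show ?thesis
    unfolding u(2) gr_of_eq_finsum_ghom[OF u(1)] by blast
qed

(* The product is additive in each factor and homogeneous elements span Gr, so it suffices to
   consider homogeneous factors, whose products are computed in R. *)
lemma GR_mult_assoc:
  assumes "G \<in> carrier GR" "H \<in> carrier GR" "K \<in> carrier GR"
  shows "G \<otimes>\<^bsub>GR\<^esub> H \<otimes>\<^bsub>GR\<^esub> K = G \<otimes>\<^bsub>GR\<^esub> (H \<otimes>\<^bsub>GR\<^esub> K)"
  using assms(3)
proof (induction rule: GR_induct)
  case (hom d3 c)
  from assms(2) show ?case
  proof (induction rule: GR_induct)
    case (hom d2 b)
    from assms(1) show ?case
    proof (induction rule: GR_induct)
      case (hom d1 a)
      then show ?case
        using \<open>b \<in> Fil d2\<close> \<open>c \<in> Fil d3\<close> pbw_span_closed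
        by (simp add: ghom_mult Fil_mult m_assoc add.assoc)
    next
      case (add G1 G2)
      then show ?case
        using \<open>b \<in> Fil d2\<close> \<open>c \<in> Fil d3\<close>
        by (simp add: GR_l_distr GR_mult_closed ghom_closed)
    qed
  next
    case (add H1 H2)
    then show ?case
      using assms(1) \<open>c \<in> Fil d3\<close>
      by (simp add: GR_l_distr GR_r_distr GR_mult_closed ghom_closed)
  qed
next
  case (add K1 K2)
  then show ?case
    using assms(1,2) by (simp add: GR_r_distr GR_mult_closed)
qed

lemma GR_one_closed: "\<one>\<^bsub>GR\<^esub> \<in> carrier GR"
  by (simp add: GR_one_eq ghom_closed one_Fil)

lemma GR_l_one: "G \<in> carrier GR \<Longrightarrow> \<one>\<^bsub>GR\<^esub> \<otimes>\<^bsub>GR\<^esub> G = G"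
proof (induction rule: GR_induct)
  case (hom d a)
  then show ?case using pbw_span_closed by (simp add: GR_one_eq ghom_mult one_Fil)
next
  case (add G H)
  then show ?case by (simp add: GR_r_distr GR_one_closed)
qed

lemma GR_r_one: "G \<in> carrier GR \<Longrightarrow> G \<otimes>\<^bsub>GR\<^esub> \<one>\<^bsub>GR\<^esub> = G"
proof (induction rule: GR_induct)
  case (hom d a)
  then show ?case using pbw_span_closed by (simp add: GR_one_eq ghom_mult one_Fil)
next
  case (add G H)
  then show ?case by (simp add: GR_l_distr GR_one_closed)
qed

lemma GR_ring: "ring GR"
proof (rule ringI)
  show "monoid GR"
    by (rule monoidI) (simp_all add: GR_mult_closed GR_one_closed GR_mult_assoc GR_l_one GR_r_one)
qed (simp_all add: GR_abelian_group GR_l_distr GR_r_distr)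

interpretation GR: ring GR
  by (rule GR_ring)

abbreviation gemb :: "'k \<Rightarrow> nat \<times> nat \<Rightarrow> 'a set" where
  "gemb \<equiv> gr_emb R emb x y h"

lemma gemb_central:
  assumes "G \<in> carrier GR"
  shows "gemb c \<otimes>\<^bsub>GR\<^esub> G = G \<otimes>\<^bsub>GR\<^esub> gemb c"
  using assms unfolding gr_emb_def
proof (induction rule: GR_induct)
  case (hom d a)
  then show ?case
    using pbw_span_closed by (simp add: ghom_mult emb_Fil emb_comm)
next
  case (add G H)
  then show ?case by (simp add: GR_l_distr GR_r_distr ghom_closed emb_Fil)
qed

lemma GR_F_algebra: "is_F_algebra GR gemb"
  unfolding is_F_algebra_def
  by (simp add: GR_ring gr_emb_def ghom_closed emb_Fil ghom_add ghom_mult emb_add emb_mult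
      GR_one_eq gemb_central[unfolded gr_emb_def])

section \<open>Relations and normal form in the graded ring\<close>

lemma ghom_pow:
  assumes "a \<in> Fil d"
  shows "ghom d a [^]\<^bsub>GR\<^esub> n = ghom (n * fst d, n * snd d) (a [^] n)"
proof (induction n)
  case 0
  then show ?case by (simp add: GR_one_eq)
next
  case (Suc n)
  then show ?case
    using assms Fil_pow[OF assms, of n] by (cases d) (simp add: ghom_mult nat_pow_Suc add.commute)
qed

lemma finsum_ghom_same:
  assumes "finite A" "\<And>i. i \<in> A \<Longrightarrow> F i \<in> Fil d"
  shows "finsum GR (\<lambda>i. ghom d (F i)) A = ghom d (finsum R F A)"
  using assms
proof (induction A rule: finite_induct)
  case empty
  then show ?case by (simp add: ghom_zero)
next
  case (insert a A)
  have "F \<in> A \<rightarrow> carrier R" "F a \<in> carrier R" "finsum R F A \<in> Fil d"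
    using insert by (auto intro: pbw_span_closed pbw_span_finsum)
  with insert show ?case
    using pbw_span_closed by (simp add: ghom_closed ghom_add)
qed

abbreviation xG :: "nat \<times> nat \<Rightarrow> 'a set" where "xG \<equiv> ghom (1, 0) x"
abbreviation yG :: "nat \<times> nat \<Rightarrow> 'a set" where "yG \<equiv> ghom (0, 1) y"
abbreviation hG :: "nat \<times> nat \<Rightarrow> 'a set" where "hG \<equiv> ghom (0, 0) h"

lemma peval_GR: "peval GR gemb p hG = ghom (0, 0) (ev p)"
proof -
  have "gemb (coeff p i) \<otimes>\<^bsub>GR\<^esub> hG [^]\<^bsub>GR\<^esub> i = ghom (0, 0) (emb (coeff p i) \<otimes> h [^] i)" for i
    using ghom_mult[OF emb_Fil Fil_pow[OF h_Fil]] by (simp add: gr_emb_def ghom_pow[OF h_Fil])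
  moreover have "emb (coeff p i) \<otimes> h [^] i \<in> Fil (0, 0)" for i
    using Fil_mult[OF emb_Fil Fil_pow[OF h_Fil]] by simp
  ultimately show ?thesis
    by (simp add: peval_def finsum_ghom_same)
qed

lemma GR_pbw: "xG [^]\<^bsub>GR\<^esub> i \<otimes>\<^bsub>GR\<^esub> peval GR gemb p hG \<otimes>\<^bsub>GR\<^esub> yG [^]\<^bsub>GR\<^esub> j
    = ghom (i, j) (pbw i j p)"
proof -
  have "xG [^]\<^bsub>GR\<^esub> i = ghom (i, 0) (x [^] i)" "yG [^]\<^bsub>GR\<^esub> j = ghom (0, j) (y [^] j)"
    using ghom_pow[OF x_Fil, of i] ghom_pow[OF y_Fil, of j] by simp_all
  then show ?thesis
    using Fil_mult[OF Fil_pow[OF x_Fil, of i] ev_Fil[of p]] Fil_pow[OF x_Fil, of i]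
      Fil_pow[OF y_Fil, of j]
    by (simp add: peval_GR ghom_mult ev_Fil pbw_def)
qed

lemma nf_GR:
  assumes "finite (psupp P)"
  shows "nf GR gemb xG yG hG P = gr_of (\<lambda>(i, j). pbw i j (P i j))"
proof -
  have "(\<lambda>(i, j). xG [^]\<^bsub>GR\<^esub> i \<otimes>\<^bsub>GR\<^esub> peval GR gemb (P i j) hG \<otimes>\<^bsub>GR\<^esub> yG [^]\<^bsub>GR\<^esub> j)
      = (\<lambda>d. ghom d ((\<lambda>(i, j). pbw i j (P i j)) d))"
    using GR_pbw[simplified] by auto \<comment> \<open>One_nat_def turns the 1 in xG, yG into Suc 0\<close>
  then have "nf GR gemb xG yG hG P = finsum GR (\<lambda>d. ghom d ((\<lambda>(i, j). pbw i j (P i j)) d)) (psupp P)"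
    unfolding nf_def by simp
  also have "\<dots> = gr_of (\<lambda>d. if d \<in> psupp P then (\<lambda>(i, j). pbw i j (P i j)) d else \<zero>)"
    using assms by (simp add: finsum_ghom pbw_Fil split: prod.splits)
  also have "\<dots> = gr_of (\<lambda>(i, j). pbw i j (P i j))"
    by (rule arg_cong[where f = gr_of]) (auto simp: psupp_def)
  finally show ?thesis .
qed

lemma GR_normal_form_exists:
  assumes "G \<in> carrier GR"
  shows "\<exists>P. finite (psupp P) \<and> G = nf GR gemb xG yG hG P"
proof -
  obtain u where u: "gr_family u" "G = gr_of u" using assms by (elim GR_carrierE)
  define P where "P i j = coef (u (i, j)) i j" for i j
  have "psupp P \<subseteq> {d. u d \<notin> Fil_less d}"
  proof
    fix d assume d: "d \<in> psupp P"
    obtain i j where ij: "d = (i, j)" by (cases d)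
    have "(i, j) \<in> psupp (coef (u (i, j)))" using d by (simp add: ij psupp_def P_def)
    then show "d \<in> {d. u d \<notin> Fil_less d}" by (auto simp: ij pbw_span_iff)
  qed
  then have fin: "finite (psupp P)"
    using u(1) unfolding gr_family_def by (blast intro: finite_subset)
  have "G = nf GR gemb xG yG hG P"
    unfolding u(2) nf_GR[OF fin]
  proof (rule gr_of_eqI)
    fix d :: "nat \<times> nat"
    obtain i j where d: "d = (i, j)" by (cases d)
    show "u d \<in> carrier R" "(\<lambda>(i, j). pbw i j (P i j)) d \<in> carrier R"
      using gr_family_closed[OF u(1)] by (simp_all add: d)
    show "u d \<ominus> (\<lambda>(i, j). pbw i j (P i j)) d \<in> Fil_less d"
      using pbw_leading[OF gr_family_Fil[OF u(1)], of i j] by (simp add: d P_def)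
  qed
  with fin show ?thesis by blast
qed

lemma GR_normal_form_unique:
  assumes "finite (psupp P)" "finite (psupp P')"
    and "nf GR gemb xG yG hG P = nf GR gemb xG yG hG P'"
  shows "P = P'"
proof (intro ext)
  fix i j
  have "gr_of (\<lambda>(i, j). pbw i j (P i j)) = gr_of (\<lambda>(i, j). pbw i j (P' i j))"
    using assms(3) unfolding nf_GR[OF assms(1)] nf_GR[OF assms(2)] .
  then have "gr_of (\<lambda>(i, j). pbw i j (P i j)) (i, j) = gr_of (\<lambda>(i, j). pbw i j (P' i j)) (i, j)"
    by simp
  then have "pbw i j (P i j) \<ominus> pbw i j (P' i j) \<in> Fil_less (i, j)"
    by (simp add: gr_of_def cls_eq_iff)
  then show "P i j = P' i j"
    by (simp add: pbw_diff[symmetric] pbw_Fil_less_iff)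
qed

lemma GR_h_x: "hG \<otimes>\<^bsub>GR\<^esub> xG = xG \<otimes>\<^bsub>GR\<^esub> peval GR gemb f hG"
  unfolding peval_GR ghom_mult[OF h_Fil x_Fil] ghom_mult[OF x_Fil ev_Fil] h_x by simp

lemma GR_y_h: "yG \<otimes>\<^bsub>GR\<^esub> hG = peval GR gemb f hG \<otimes>\<^bsub>GR\<^esub> yG"
  unfolding peval_GR ghom_mult[OF y_Fil h_Fil] ghom_mult[OF ev_Fil y_Fil] y_h by simp

lemma GR_y_x: "yG \<otimes>\<^bsub>GR\<^esub> xG = gemb q \<otimes>\<^bsub>GR\<^esub> xG \<otimes>\<^bsub>GR\<^esub> yG \<oplus>\<^bsub>GR\<^esub> peval GR gemb 0 hG"
proof -
  have qx: "emb q \<otimes> x \<in> Fil ((0, 0) + (1, 0))" by (rule Fil_mult[OF emb_Fil x_Fil])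
  have qxy: "emb q \<otimes> x \<otimes> y \<in> Fil ((0, 0) + (1, 0) + (0, 1))" by (rule Fil_mult[OF qx y_Fil])
  have "ev g \<in> Fil_less (1, 1)"
    using ev_Fil by (rule pbw_span_mono[rotated]) auto
  then have "ghom ((0, 1) + (1, 0)) (y \<otimes> x) = ghom ((0, 0) + (1, 0) + (0, 1)) (emb q \<otimes> x \<otimes> y)"
    by (simp add: ghom_cong y_x_minus)
  moreover have "peval GR gemb 0 hG = \<zero>\<^bsub>GR\<^esub>"
    by (simp add: peval_GR ghom_zero)
  ultimately show ?thesis
    using ghom_closed[OF qxy]
    unfolding gr_emb_def ghom_mult[OF y_Fil x_Fil] ghom_mult[OF emb_Fil x_Fil] ghom_mult[OF qx y_Fil]
    by simp
qed

lemma GR_is_Hq: "is_Hq GR gemb q f 0 xG yG hG"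
  unfolding is_Hq_def
  using GR_F_algebra ghom_closed[OF x_Fil] ghom_closed[OF y_Fil] ghom_closed[OF h_Fil]
    GR_h_x GR_y_h GR_y_x GR_normal_form_exists GR_normal_form_unique
  by blast

end

theorem mainTheorem3:
  fixes R :: "'a ring" and emb :: "'k::field \<Rightarrow> 'a"
    and q :: 'k and f g :: "'k poly" and x y h :: 'a
  assumes "is_Hq R emb q f g x y h"
  shows "is_Hq (Gr R emb x y h) (gr_emb R emb x y h) q f 0
           (gr_hom R emb x y h (1, 0) x)
           (gr_hom R emb x y h (0, 1) y)
           (gr_hom R emb x y h (0, 0) h)"
proof -
  interpret Hq R emb q f g x y h by (rule Hq.intro) (rule assms)
  show ?thesis by (rule GR_is_Hq)
qed

end
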